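(* For odd $N\ge5$ let $G_{N,1}$ be the graph with vertex set $\mathbb Z_N$ in which two distinct vertices $i,j$ are adjacent iff $j-i\not\equiv\pm1\pmod N$. Fix an integer $q\ge 1$ independent of $N$, and for each $N$ let $u,v\in\mathbb Z_N$ with $v-u\equiv q\pmod N$. Then the effective resistance $R^{(1)}(u,v)$ in $G_{N,1}$ satisfies \[ R^{(1)}(u,v)\sim\frac{2}{N}\qquad (N\to\infty \text{ through odd integers}). \]
   Context: Effective resistance is computed with unit conductance on every edge; $a_N\sim b_N$ means $a_N/b_N\to1$. *)

theory Defs
  imports "HOL-Analysis.Analysis" "HOL-Library.Landau_Symbols"
begin

text \<open>A finite simple graph given by a vertex set V and a symmetric irreflexive
  adjacency relation E; every edge has unit conductance.  The effective resistance
  between u and v is the potential difference phi u - phi v of any potential phi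
  on V solving the Kirchhoff equations (graph Laplacian L phi = 1_u - 1_v),
  i.e. unit current injected at u and extracted at v.\<close>

definition kirchhoff_potential :: "'a set \<Rightarrow> ('a \<Rightarrow> 'a \<Rightarrow> bool) \<Rightarrow> 'a \<Rightarrow> 'a \<Rightarrow> ('a \<Rightarrow> real) \<Rightarrow> bool" where
  "kirchhoff_potential V E u v phi \<longleftrightarrow>
     (\<forall>x\<in>V. (\<Sum>y\<in>{y\<in>V. E x y}. phi x - phi y) =
              (if x = u then 1 else 0) - (if x = v then 1 else 0))"

definition eff_resistance :: "'a set \<Rightarrow> ('a \<Rightarrow> 'a \<Rightarrow> bool) \<Rightarrow> 'a \<Rightarrow> 'a \<Rightarrow> real" where
  "eff_resistance V E u v =
     (THE r. \<exists>phi. kirchhoff_potential V E u v phi \<and> r = phi u - phi v)"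

definition ZN :: "nat \<Rightarrow> int set" where
  "ZN N = {0..<int N}"

definition G1_adj :: "nat \<Rightarrow> int \<Rightarrow> int \<Rightarrow> bool" where
  "G1_adj N i j \<longleftrightarrow> i \<noteq> j \<and> (j - i) mod int N \<noteq> 1 \<and> (j - i) mod int N \<noteq> (-1) mod int N"

end

theory Submission
  imports Defs "HOL-Real_Asymp.Real_Asymp"
begin

text \<open>
  The Laplacian of G_{N,1} acts on a potential f as
  (N - 2) f(x) + f(x + 1) + f(x - 1) - sum f, so a potential of mean zero solves the
  Kirchhoff equations iff (N - 2) f + S f = 1_u - 1_v, where S f(x) = f(x + 1) + f(x - 1).
  As S has sup-norm at most 2 < N - 2, this system is solved by a Neumann series, and the
  maximum principle yields uniqueness up to constants as well as the bound
  |f| \<le> 1/(N - 4). Reading the equation at u and at v gives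
  (N - 2)(f(u) - f(v)) = 2 + O(1/N), i.e. R = 2/(N - 2) + O(1/N^2).
  The offset q only serves to make u \<noteq> v once N > q.
\<close>

text \<open>neumann_term c s t b k = (-S/c)^k (b/c) with S f = f \<circ> s + f \<circ> t, so that
  neumann_solution c s t b = (c + S)^{-1} b.\<close>

primrec neumann_term :: "real \<Rightarrow> ('a \<Rightarrow> 'a) \<Rightarrow> ('a \<Rightarrow> 'a) \<Rightarrow> ('a \<Rightarrow> real) \<Rightarrow> nat \<Rightarrow> 'a \<Rightarrow> real" where
  "neumann_term c s t b 0 x = b x / c"
| "neumann_term c s t b (Suc k) x =
     - (neumann_term c s t b k (s x) + neumann_term c s t b k (t x)) / c"

definition neumann_solution :: "real \<Rightarrow> ('a \<Rightarrow> 'a) \<Rightarrow> ('a \<Rightarrow> 'a) \<Rightarrow> ('a \<Rightarrow> real) \<Rightarrow> 'a \<Rightarrow> real" where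
  "neumann_solution c s t b x = (\<Sum>k. neumann_term c s t b k x)"

lemma abs_neumann_term_le:
  assumes "c > 0" and "\<And>x. \<bar>b x\<bar> \<le> \<beta>"
  shows "\<bar>neumann_term c s t b k x\<bar> \<le> \<beta> * (2 / c) ^ k / c"
proof (induction k arbitrary: x)
  case 0
  show ?case using assms by (simp add: abs_divide divide_right_mono)
next
  case (Suc k)
  have "\<bar>neumann_term c s t b (Suc k) x\<bar>
      = \<bar>neumann_term c s t b k (s x) + neumann_term c s t b k (t x)\<bar> / c"
    using assms(1) by (simp add: abs_divide)
  also have "\<dots> \<le> (2 * (\<beta> * (2 / c) ^ k / c)) / c"
    using Suc.IH[of "s x"] Suc.IH[of "t x"] assms(1) by (intro divide_right_mono) linarith+
  also have "\<dots> = \<beta> * (2 / c) ^ Suc k / c"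
    by simp
  finally show ?case .
qed

lemma summable_neumann_term:
  assumes "c > 2" and "\<And>x. \<bar>b x\<bar> \<le> \<beta>"
  shows "summable (\<lambda>k. neumann_term c s t b k x)"
proof (rule summable_comparison_test')
  show "summable (\<lambda>k. \<beta> * (2 / c) ^ k / c)"
    using assms(1) by (intro summable_divide summable_mult summable_geometric) simp
  show "norm (neumann_term c s t b k x) \<le> \<beta> * (2 / c) ^ k / c" for k
    using abs_neumann_term_le[of c b \<beta>] assms by simp
qed

lemma neumann_solution_eq:
  fixes s t :: "'a \<Rightarrow> 'a"
  assumes "c > 2" and "\<And>x. \<bar>b x\<bar> \<le> \<beta>"
  defines "\<phi> \<equiv> neumann_solution c s t b"
  shows "c * \<phi> x + \<phi> (s x) + \<phi> (t x) = b x"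
proof -
  have sums: "(\<lambda>k. neumann_term c s t b k y) sums \<phi> y" for y
    unfolding \<phi>_def neumann_solution_def using summable_neumann_term[OF assms(1,2)]
    by (rule summable_sums)
  have "(\<lambda>k. neumann_term c s t b (Suc k) x) sums (- (\<phi> (s x) + \<phi> (t x)) / c)"
    using sums_divide[OF sums_minus[OF sums_add[OF sums[of "s x"] sums[of "t x"]]]] by simp
  then have "(\<lambda>k. neumann_term c s t b k x) sums (- (\<phi> (s x) + \<phi> (t x)) / c + b x / c)"
    using sums_Suc_iff[of "\<lambda>k. neumann_term c s t b k x"] by simp
  then have "\<phi> x = - (\<phi> (s x) + \<phi> (t x)) / c + b x / c"
    using sums[of x] sums_unique2 by blast
  then show ?thesis
    using assms(1) by (simp add: field_simps)
qed

lemma maximum_principle_two_shifts: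
  fixes \<phi> :: "'a \<Rightarrow> real"
  assumes "finite V" "s ` V \<subseteq> V" "t ` V \<subseteq> V" "c > 2"
    and bound: "\<And>y. y \<in> V \<Longrightarrow> \<bar>c * \<phi> y + \<phi> (s y) + \<phi> (t y)\<bar> \<le> \<beta>"
    and "x \<in> V"
  shows "\<bar>\<phi> x\<bar> \<le> \<beta> / (c - 2)"
proof -
  define m where "m = Max ((\<lambda>y. \<bar>\<phi> y\<bar>) ` V)"
  have le_m: "\<bar>\<phi> y\<bar> \<le> m" if "y \<in> V" for y
    unfolding m_def using assms(1) that by (intro Max_ge) auto
  have "m \<in> (\<lambda>y. \<bar>\<phi> y\<bar>) ` V"
    unfolding m_def using assms(1,6) by (intro Max_in) auto
  then obtain x0 where x0: "x0 \<in> V" "m = \<bar>\<phi> x0\<bar>"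
    by auto
  have st: "s x0 \<in> V" "t x0 \<in> V"
    using x0(1) assms(2,3) by auto
  have "c * m = \<bar>c * \<phi> x0\<bar>"
    using x0(2) assms(4) by (simp add: abs_mult)
  also have "\<dots> \<le> \<bar>c * \<phi> x0 + \<phi> (s x0) + \<phi> (t x0)\<bar> + \<bar>\<phi> (s x0)\<bar> + \<bar>\<phi> (t x0)\<bar>"
    by linarith
  also have "\<dots> \<le> \<beta> + 2 * m"
    using bound[OF x0(1)] le_m[OF st(1)] le_m[OF st(2)] by linarith
  finally have "m \<le> \<beta> / (c - 2)"
    using assms(4) by (simp add: field_simps)
  then show ?thesis
    using le_m[OF assms(6)] by linarith
qed

abbreviation cyc_next :: "nat \<Rightarrow> int \<Rightarrow> int" where
  "cyc_next N x \<equiv> (x + 1) mod int N"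

abbreviation cyc_prev :: "nat \<Rightarrow> int \<Rightarrow> int" where
  "cyc_prev N x \<equiv> (x - 1) mod int N"

lemma finite_ZN [simp]: "finite (ZN N)"
  and card_ZN [simp]: "card (ZN N) = N"
  by (simp_all add: ZN_def)

lemma mod_in_ZN [simp]: "N > 0 \<Longrightarrow> x mod int N \<in> ZN N"
  by (simp add: ZN_def)

lemma mod_eq_near_range:
  fixes a n :: int
  assumes "- n \<le> a" "a < 2 * n"
  shows "a mod n = (if a < 0 then a + n else if a < n then a else a - n)"
  using mod_pos_pos_trivial[of a n] mod_pos_pos_trivial[of "a + n" n] mod_pos_pos_trivial[of "a - n" n] assms
  by auto

lemma cyc_next_eq: "x \<in> ZN N \<Longrightarrow> cyc_next N x = (if x + 1 = int N then 0 else x + 1)"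
  and cyc_prev_eq: "x \<in> ZN N \<Longrightarrow> cyc_prev N x = (if x = 0 then int N - 1 else x - 1)"
  by (simp_all add: ZN_def mod_eq_near_range)

lemma G1_adj_iff:
  assumes "x \<in> ZN N" "y \<in> ZN N"
  shows "G1_adj N x y \<longleftrightarrow> y \<notin> {x, cyc_next N x, cyc_prev N x}"
  using assms by (auto simp: G1_adj_def ZN_def mod_eq_near_range)

lemma cyc_neighbours_distinct:
  assumes "N \<ge> 3" "x \<in> ZN N"
  shows "x \<noteq> cyc_next N x" "x \<noteq> cyc_prev N x" "cyc_next N x \<noteq> cyc_prev N x"
  using assms by (auto simp: cyc_next_eq cyc_prev_eq ZN_def)

lemma sum_cyc_shift:
  assumes "N > 0"
  shows "(\<Sum>x\<in>ZN N. f (cyc_next N x)) = sum f (ZN N)"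
    and "(\<Sum>x\<in>ZN N. f (cyc_prev N x)) = sum f (ZN N)"
proof -
  have "bij_betw (cyc_next N) (ZN N) (ZN N)"
    by (rule bij_betw_byWitness[where f'="cyc_prev N"]) (use assms in \<open>auto simp: ZN_def mod_simps\<close>)
  then show "(\<Sum>x\<in>ZN N. f (cyc_next N x)) = sum f (ZN N)"
    by (rule sum.reindex_bij_betw)
  have "bij_betw (cyc_prev N) (ZN N) (ZN N)"
    by (rule bij_betw_byWitness[where f'="cyc_next N"]) (use assms in \<open>auto simp: ZN_def mod_simps\<close>)
  then show "(\<Sum>x\<in>ZN N. f (cyc_prev N x)) = sum f (ZN N)"
    by (rule sum.reindex_bij_betw)
qed

text \<open>The Laplacian of G_{N,1} is that of the complete graph minus that of the cycle.\<close>

lemma G1_laplacian: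
  assumes "N \<ge> 3" "x \<in> ZN N"
  shows "(\<Sum>y\<in>{y\<in>ZN N. G1_adj N x y}. f x - f y)
     = (real N - 2) * f x + f (cyc_next N x) + f (cyc_prev N x) - sum f (ZN N)"
proof -
  let ?S = "{x, cyc_next N x, cyc_prev N x}"
  note distinct = cyc_neighbours_distinct[OF assms]
  have S: "?S \<subseteq> ZN N" "card ?S = 3"
    using assms distinct by auto
  have "(\<Sum>y\<in>ZN N - ?S. f x - f y) = real (card (ZN N - ?S)) * f x - (sum f (ZN N) - sum f ?S)"
    using S by (simp add: sum_subtractf sum_diff)
  also have "\<dots> = (real N - 2) * f x + f (cyc_next N x) + f (cyc_prev N x) - sum f (ZN N)"
    using S assms(1) distinct by (simp add: card_Diff_subset of_nat_diff algebra_simps)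
  moreover have "{y\<in>ZN N. G1_adj N x y} = ZN N - ?S"
    using G1_adj_iff[OF assms(2)] by auto
  ultimately show ?thesis
    by simp
qed

definition dipole :: "'a \<Rightarrow> 'a \<Rightarrow> 'a \<Rightarrow> real" where
  "dipole u v x = (if x = u then 1 else 0) - (if x = v then 1 else 0)"

lemma abs_dipole_le: "\<bar>dipole u v x\<bar> \<le> 1"
  by (simp add: dipole_def)

lemma kirchhoff_potential_G1_iff:
  assumes "N \<ge> 3"
  shows "kirchhoff_potential (ZN N) (G1_adj N) u v \<phi> \<longleftrightarrow>
    (\<forall>x\<in>ZN N. (real N - 2) * \<phi> x + \<phi> (cyc_next N x) + \<phi> (cyc_prev N x) - sum \<phi> (ZN N)
                = dipole u v x)"
  using G1_laplacian[OF assms] by (simp add: kirchhoff_potential_def dipole_def)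

lemma G1_maximum_principle:
  assumes "N \<ge> 5"
    and "\<forall>y\<in>ZN N. \<bar>(real N - 2) * \<phi> y + \<phi> (cyc_next N y) + \<phi> (cyc_prev N y)\<bar> \<le> \<beta>"
    and "x \<in> ZN N"
  shows "\<bar>\<phi> x\<bar> \<le> \<beta> / (real N - 4)"
proof -
  have "\<bar>\<phi> x\<bar> \<le> \<beta> / (real N - 2 - 2)"
    using assms by (intro maximum_principle_two_shifts[of "ZN N" "cyc_next N" "cyc_prev N"]) auto
  then show ?thesis
    by simp
qed

definition G1_potential :: "nat \<Rightarrow> int \<Rightarrow> int \<Rightarrow> int \<Rightarrow> real" where
  "G1_potential N u v = neumann_solution (real N - 2) (cyc_next N) (cyc_prev N) (dipole u v)"

lemma G1_potential_eq:
  assumes "N \<ge> 5"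
  shows "(real N - 2) * G1_potential N u v x + G1_potential N u v (cyc_next N x)
           + G1_potential N u v (cyc_prev N x) = dipole u v x"
  unfolding G1_potential_def using assms abs_dipole_le by (intro neumann_solution_eq) auto

lemma abs_G1_potential_le:
  assumes "N \<ge> 5" "x \<in> ZN N"
  shows "\<bar>G1_potential N u v x\<bar> \<le> 1 / (real N - 4)"
  using assms by (intro G1_maximum_principle) (simp_all add: G1_potential_eq abs_dipole_le)

lemma kirchhoff_potential_G1_potential:
  assumes "N \<ge> 5" "u \<in> ZN N" "v \<in> ZN N"
  shows "kirchhoff_potential (ZN N) (G1_adj N) u v (G1_potential N u v)"
proof -
  let ?\<phi> = "G1_potential N u v"
  have N: "N > 0"
    using assms(1) by simp
  have "real N * sum ?\<phi> (ZN N) = (real N - 2) * sum ?\<phi> (ZN N) + sum ?\<phi> (ZN N) + sum ?\<phi> (ZN N)"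
    by (simp add: algebra_simps)
  also have "\<dots> = (\<Sum>x\<in>ZN N. (real N - 2) * ?\<phi> x + ?\<phi> (cyc_next N x) + ?\<phi> (cyc_prev N x))"
    by (simp only: sum.distrib sum_distrib_left sum_cyc_shift[OF N])
  also have "\<dots> = (\<Sum>x\<in>ZN N. dipole u v x)"
    using assms(1) by (simp add: G1_potential_eq)
  also have "\<dots> = 0"
    using assms(2,3) by (simp add: dipole_def sum_subtractf)
  finally have "sum ?\<phi> (ZN N) = 0"
    using assms(1) by simp
  then show ?thesis
    using assms(1) by (simp add: kirchhoff_potential_G1_iff G1_potential_eq)
qed

lemma G1_harmonic_imp_constant:
  assumes "N \<ge> 5"
    and harmonic: "\<forall>x\<in>ZN N. (real N - 2) * w x + w (cyc_next N x) + w (cyc_prev N x) = sum w (ZN N)"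
    and "x \<in> ZN N" "y \<in> ZN N"
  shows "w x = w y"
proof -
  define m where "m = sum w (ZN N) / real N"
  have Nm: "real N * m = sum w (ZN N)"
    using assms(1) by (simp add: m_def)
  have "(real N - 2) * (w z - m) + (w (cyc_next N z) - m) + (w (cyc_prev N z) - m) = 0"
    if "z \<in> ZN N" for z
  proof -
    have "(real N - 2) * (w z - m) + (w (cyc_next N z) - m) + (w (cyc_prev N z) - m)
        = ((real N - 2) * w z + w (cyc_next N z) + w (cyc_prev N z)) - real N * m"
      by (simp add: algebra_simps)
    also have "\<dots> = 0"
      using harmonic that Nm by simp
    finally show ?thesis .
  qed
  then have "\<bar>w z - m\<bar> \<le> 0 / (real N - 4)" if "z \<in> ZN N" for z
    using G1_maximum_principle[of N "\<lambda>z. w z - m" 0 z] assms(1) that by simp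
  then have "w z = m" if "z \<in> ZN N" for z
    using that by simp
  then show ?thesis
    using assms(3,4) by simp
qed

lemma eff_resistance_eqI:
  assumes "kirchhoff_potential V E u v \<phi>"
    and "\<And>\<psi>. kirchhoff_potential V E u v \<psi> \<Longrightarrow> \<psi> u - \<psi> v = \<phi> u - \<phi> v"
  shows "eff_resistance V E u v = \<phi> u - \<phi> v"
  unfolding eff_resistance_def
proof (rule the_equality)
  show "\<exists>\<psi>. kirchhoff_potential V E u v \<psi> \<and> \<phi> u - \<phi> v = \<psi> u - \<psi> v"
    using assms(1) by blast
  show "r = \<phi> u - \<phi> v" if "\<exists>\<psi>. kirchhoff_potential V E u v \<psi> \<and> r = \<psi> u - \<psi> v" for r
    using that assms(2) by blast
qed

lemma G1_eff_resistance:
  assumes "N \<ge> 5" "u \<in> ZN N" "v \<in> ZN N"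
  shows "eff_resistance (ZN N) (G1_adj N) u v = G1_potential N u v u - G1_potential N u v v"
proof (rule eff_resistance_eqI)
  let ?\<phi> = "G1_potential N u v"
  have N3: "N \<ge> 3"
    using assms(1) by simp
  show \<phi>: "kirchhoff_potential (ZN N) (G1_adj N) u v ?\<phi>"
    using assms by (rule kirchhoff_potential_G1_potential)
  fix \<psi> assume \<psi>: "kirchhoff_potential (ZN N) (G1_adj N) u v \<psi>"
  let ?w = "\<lambda>x. \<psi> x - ?\<phi> x"
  have "(real N - 2) * ?w x + ?w (cyc_next N x) + ?w (cyc_prev N x) = sum ?w (ZN N)"
    if "x \<in> ZN N" for x
  proof -
    have "(real N - 2) * \<psi> x + \<psi> (cyc_next N x) + \<psi> (cyc_prev N x) - sum \<psi> (ZN N) = dipole u v x"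
         "(real N - 2) * ?\<phi> x + ?\<phi> (cyc_next N x) + ?\<phi> (cyc_prev N x) - sum ?\<phi> (ZN N) = dipole u v x"
      using \<phi> \<psi> that unfolding kirchhoff_potential_G1_iff[OF N3] by blast+
    then show ?thesis
      by (simp add: sum_subtractf algebra_simps)
  qed
  then show "\<psi> u - \<psi> v = ?\<phi> u - ?\<phi> v"
    using G1_harmonic_imp_constant[of N ?w u v] assms by simp
qed

lemma G1_eff_resistance_approx:
  assumes "N \<ge> 5" "u \<in> ZN N" "v \<in> ZN N" "u \<noteq> v"
  shows "\<bar>eff_resistance (ZN N) (G1_adj N) u v - 2 / (real N - 2)\<bar>
           \<le> 4 / ((real N - 4) * (real N - 2))"
proof -
  let ?\<phi> = "G1_potential N u v"
  define T where "T = ?\<phi> (cyc_next N u) + ?\<phi> (cyc_prev N u) - ?\<phi> (cyc_next N v) - ?\<phi> (cyc_prev N v)"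
  have "(real N - 2) * (?\<phi> u - ?\<phi> v) = 2 - T"
    using G1_potential_eq[OF assms(1), of u v u] G1_potential_eq[OF assms(1), of u v v] assms(4)
    by (simp add: T_def dipole_def algebra_simps)
  then have "eff_resistance (ZN N) (G1_adj N) u v = (2 - T) / (real N - 2)"
    using G1_eff_resistance[OF assms(1-3)] assms(1) by (simp add: eq_divide_eq mult.commute)
  then have eq: "eff_resistance (ZN N) (G1_adj N) u v - 2 / (real N - 2) = - T / (real N - 2)"
    by (simp add: diff_divide_distrib)
  have "N > 0"
    using assms(1) by simp
  then have b: "\<bar>?\<phi> (y mod int N)\<bar> \<le> 1 / (real N - 4)" for y
    using abs_G1_potential_le[OF assms(1)] by simp
  have "\<bar>T\<bar> \<le> 4 / (real N - 4)"
    using b[of "u + 1"] b[of "u - 1"] b[of "v + 1"] b[of "v - 1"] unfolding T_def by linarith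
  then have "\<bar>T\<bar> / (real N - 2) \<le> 4 / (real N - 4) / (real N - 2)"
    using assms(1) by (intro divide_right_mono) auto
  moreover have "\<bar>real N - 2\<bar> = real N - 2"
    using assms(1) by simp
  ultimately show ?thesis
    unfolding eq by (simp add: abs_divide)
qed

lemma asymp_equiv_filter_mono: "F \<le> G \<Longrightarrow> f \<sim>[G] g \<Longrightarrow> f \<sim>[F] g"
  unfolding asymp_equiv_altdef by (rule landau_o.small.filter_mono)

theorem mainTheorem11:
  fixes q :: nat and u v :: "nat \<Rightarrow> int"
  assumes "q \<ge> 1"
    and "\<And>N. odd N \<Longrightarrow> N \<ge> 5 \<Longrightarrow> u N \<in> ZN N \<and> v N \<in> ZN N \<and> (v N - u N) mod int N = int q mod int N"
  shows "(\<lambda>N. eff_resistance (ZN N) (G1_adj N) (u N) (v N))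
           \<sim>[inf at_top (principal {N. odd N})] (\<lambda>N. 2 / real N)"
proof (rule asymp_equiv_sandwich_real)
  let ?F = "inf at_top (principal {N::nat. odd N})"
  let ?err = "\<lambda>N. 4 / ((real N - 4) * (real N - 2))"
  show "(\<lambda>N. 2 / (real N - 2) - ?err N) \<sim>[?F] (\<lambda>N. 2 / real N)"
       "(\<lambda>N. 2 / (real N - 2) + ?err N) \<sim>[?F] (\<lambda>N. 2 / real N)"
    by (rule asymp_equiv_filter_mono[OF inf_le1], real_asymp)+
  show "\<forall>\<^sub>F N in ?F. eff_resistance (ZN N) (G1_adj N) (u N) (v N)
                     \<in> {2 / (real N - 2) - ?err N..2 / (real N - 2) + ?err N}"
    unfolding eventually_inf_principal
  proof (rule eventually_mono[OF eventually_ge_at_top[of "max 5 (q + 1)"]], intro impI)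
    fix N :: nat assume N: "max 5 (q + 1) \<le> N" and "N \<in> {N. odd N}"
    then have uv: "u N \<in> ZN N" "v N \<in> ZN N" "(v N - u N) mod int N = int q"
      using assms(2)[of N] by auto
    have "u N \<noteq> v N"
      using uv(3) assms(1) by auto
    moreover have "N \<ge> 5"
      using N by simp
    ultimately have "\<bar>eff_resistance (ZN N) (G1_adj N) (u N) (v N) - 2 / (real N - 2)\<bar> \<le> ?err N"
      using uv by (intro G1_eff_resistance_approx)
    then show "eff_resistance (ZN N) (G1_adj N) (u N) (v N)
                 \<in> {2 / (real N - 2) - ?err N..2 / (real N - 2) + ?err N}"
      by (simp only: abs_diff_le_iff atLeastAtMost_iff)
  qed
qed

end
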